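(* Let $X,Y$ be Banach spaces, let $F:X\rightrightarrows Y$ be a closed convex set-valued mapping, let $A\subset X$ be a closed convex set, let $\bar y\in Y$, put $S:=F^{-1}(\bar y)\cap A$, and let $\bar x\in S$. Suppose there exist a closed convex cone $K\subset X$ and a neighborhood $V$ of $\bar x$ such that $S\cap V=(\bar x+K)\cap V$. Then $$\frac{1}{{\rm subreg}_AF(\bar x,\bar y)}=\sup\{\eta>0:\ DF^{-1}(\bar y,\bar x)(\eta_1B_Y)\cap(T(A,\bar x)+\eta_2B_X)\subset T(S,\bar x)+B_X\ \text{for all }\eta_1,\eta_2\ge0\text{ with }\eta_1+\eta_2<\eta\}.$$
   Context: $B_X,B_Y$ are the closed unit balls; $B(x,\delta)$ is the open ball. $F$ closed convex means ${\rm gph}(F)=\{(x,y):y\in F(x)\}$ is closed and convex in $X\times Y$. For a closed convex set $C$ and $a\in C$, the contingent cone $T(C,a)$ is the set of $v$ for which there exist $v_n\to v$, $t_n\to0^+$ with $a+t_nv_n\in C$ for all $n$. For $(x,y)\in{\rm gph}(F)$, $DF^{-1}(y,x)(v):=\{u\in X:(u,v)\in T({\rm gph}(F),(x,y))\}$ and $DF^{-1}(y,x)(W)=\bigcup_{v\in W}DF^{-1}(y,x)(v)$ for $W\subset Y$. ${\rm subreg}_AF(\bar x,\bar y):=\inf\{\tau>0:\exists\delta>0$ such that $d(x,S)\le\tau(d(\bar y,F(x))+d(x,A))$ for all $x\in B(\bar x,\delta)\}$, with $\inf\emptyset=+\infty$, $\sup\emptyset=0$, $1/(+\infty)=0$,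 $1/0=+\infty$. *)

theory Defs
  imports "HOL-Analysis.Analysis"
begin

definition contingent_cone :: "'a::real_normed_vector set \<Rightarrow> 'a \<Rightarrow> 'a set" where
  "contingent_cone C a = {v. \<exists>vn tn. vn \<longlonglongrightarrow> v \<and> tn \<longlonglongrightarrow> 0 \<and> (\<forall>n. tn n > (0::real))
      \<and> (\<forall>n. a + tn n *\<^sub>R vn n \<in> C)}"

text \<open>Coderivative-type object: D F^{-1}(y,x)(W), with F given by its graph G.\<close>
definition DFinv :: "('a::real_normed_vector \<times> 'b::real_normed_vector) set \<Rightarrow> 'b \<Rightarrow> 'a \<Rightarrow> 'b set \<Rightarrow> 'a set" where
  "DFinv G y x W = {u. \<exists>v\<in>W. (u, v) \<in> contingent_cone G (x, y)}"

definition edist_set :: "'a::metric_space \<Rightarrow> 'a set \<Rightarrow> ereal" where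
  "edist_set y C = (if C = {} then \<infinity> else ereal (infdist y C))"

definition msum :: "'a::real_normed_vector set \<Rightarrow> 'a set \<Rightarrow> 'a set" where
  "msum P Q = {p + q | p q. p \<in> P \<and> q \<in> Q}"

definition solset :: "('a \<times> 'b) set \<Rightarrow> 'a set \<Rightarrow> 'b \<Rightarrow> 'a set" where
  "solset G A y = {x. (x, y) \<in> G} \<inter> A"

text \<open>Modulus of subregularity relative to A (inf of empty set = +infinity).\<close>
definition subreg :: "('a::real_normed_vector \<times> 'b::real_normed_vector) set \<Rightarrow> 'a set \<Rightarrow> 'a \<Rightarrow> 'b \<Rightarrow> ereal" where
  "subreg G A xb yb = Inf (ereal ` {\<tau>::real. \<tau> > 0 \<and> (\<exists>\<delta>>0. \<forall>x\<in>ball xb \<delta>.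
      ereal (infdist x (solset G A yb)) \<le> ereal \<tau> * (edist_set yb {y. (x, y) \<in> G} + ereal (infdist x A)))})"

definition sup0 :: "real set \<Rightarrow> ereal" where
  "sup0 E = (if E = {} then 0 else Sup (ereal ` E))"

end

theory Submission
  imports Defs
begin

text \<open>Near \<open>xb\<close> the solution set \<open>S\<close> coincides with \<open>xb + K\<close>, so \<open>T(S, xb) = K\<close> and
  \<open>d(x, S) = d(x - xb, K)\<close>, and by conicity both sides of every estimate scale linearly.
  If \<open>\<tau>\<close> is a subregularity constant, a direction \<open>u\<close> in the left-hand set of the inclusion
  is approximated by difference quotients \<open>(x - xb) / t\<close> with \<open>x\<close> close to the graph and to \<open>A\<close>;
  dividing the subregularity estimate at \<open>x\<close> by \<open>t\<close> gives \<open>d(u, K) \<le> \<tau> (\<eta>1 + \<eta>2) < 1\<close>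
  whenever \<open>\<eta>1 + \<eta>2 < 1 / \<tau>\<close>. Conversely, for \<open>(x, y)\<close> in the graph and \<open>a \<in> A\<close>,
  convexity puts \<open>s (x - xb)\<close> into \<open>DF\<inverse>(yb, xb)(s |y - yb| B) \<inter> (T(A, xb) + s |x - a| B)\<close>;
  choosing \<open>s (|y - yb| + |x - a|)\<close> just below \<open>\<eta>\<close>, the inclusion yields
  \<open>\<eta> d(x - xb, K) \<le> |y - yb| + |x - a|\<close>, so \<open>1 / \<eta>\<close> is a subregularity constant.
  Hence the admissible \<open>\<eta>\<close> are exactly the reciprocals of the admissible \<open>\<tau>\<close>.\<close>

lemma le_infdistI:
  assumes "A \<noteq> {}" "\<And>a. a \<in> A \<Longrightarrow> c \<le> dist x a"
  shows "c \<le> infdist x A"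
  using assms by (simp add: infdist_notempty cINF_greatest)

lemma infdist_approximate:
  assumes "A \<noteq> {}" "e > 0"
  obtains a where "a \<in> A" "dist x a < infdist x A + e"
proof -
  have "(INF a\<in>A. dist x a) < infdist x A + e"
    using assms by (simp add: infdist_notempty)
  with assms(1) that show ?thesis
    by (meson bdd_below_image_dist cINF_less_iff)
qed

lemma cone_infdist_scaleR_le:
  fixes K :: "'a::real_normed_vector set"
  assumes "cone K" "K \<noteq> {}" "t > 0"
  shows "t * infdist w K \<le> infdist (t *\<^sub>R w) K"
proof (rule le_infdistI[OF assms(2)])
  fix k assume "k \<in> K"
  then have "infdist w K \<le> dist w (inverse t *\<^sub>R k)"
    using assms by (intro infdist_le mem_cone) auto
  then have "t * infdist w K \<le> t * dist w (inverse t *\<^sub>R k)"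
    using assms(3) by simp
  also have "t * dist w (inverse t *\<^sub>R k) = dist (t *\<^sub>R w) k"
  proof -
    have "t *\<^sub>R w - k = t *\<^sub>R (w - inverse t *\<^sub>R k)"
      using assms(3) by (simp add: algebra_simps)
    then show ?thesis
      using assms(3) by (simp add: dist_norm)
  qed
  finally show "t * infdist w K \<le> dist (t *\<^sub>R w) k" .
qed

lemma contingent_coneI_segment:
  assumes "\<epsilon> > 0" "\<And>t. 0 < t \<Longrightarrow> t < \<epsilon> \<Longrightarrow> a + t *\<^sub>R v \<in> C"
  shows "v \<in> contingent_cone C a"
proof -
  define tn where "tn n = \<epsilon> / 2 * inverse (real (Suc n))" for n
  have "tn \<longlonglongrightarrow> 0"
    unfolding tn_def by (intro tendsto_mult_right_zero LIMSEQ_inverse_real_of_nat)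
  moreover have "0 < tn n" "tn n < \<epsilon>" for n
  proof -
    have "inverse (real (Suc n)) \<le> 1" by (simp add: inverse_le_1_iff)
    with assms(1) show "0 < tn n" "tn n < \<epsilon>"
      unfolding tn_def by (auto intro: le_less_trans[OF mult_left_le])
  qed
  ultimately show ?thesis
    unfolding contingent_cone_def using assms(2)
    by (intro CollectI exI[of _ "\<lambda>_. v"] exI[of _ tn]) auto
qed

lemma convex_add_scaleR_shrink:
  fixes C :: "'a::real_normed_vector set"
  assumes "convex C" "a \<in> C" "a + s *\<^sub>R v \<in> C" "0 \<le> t" "t \<le> s"
  shows "a + t *\<^sub>R v \<in> C"
proof (cases "s = 0")
  case True
  with assms show ?thesis by simp
next
  case False
  then have "0 \<le> t / s" "t / s \<le> 1" and s: "s > 0"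
    using assms(4,5) by auto
  moreover have "a + t *\<^sub>R v = (1 - t / s) *\<^sub>R a + (t / s) *\<^sub>R (a + s *\<^sub>R v)"
    using s by (simp add: algebra_simps)
  ultimately show ?thesis
    using assms(1-3) by (simp add: convex_alt)
qed

lemma convex_scaleR_diff_in_contingent_cone:
  fixes C :: "'a::real_normed_vector set"
  assumes "convex C" "a \<in> C" "c \<in> C" "s > 0"
  shows "s *\<^sub>R (c - a) \<in> contingent_cone C a"
proof (rule contingent_coneI_segment)
  show "0 < inverse s" using assms(4) by simp
  fix t assume "0 < t" "t < inverse s"
  have "a + inverse s *\<^sub>R (s *\<^sub>R (c - a)) \<in> C"
    using assms by simp
  from convex_add_scaleR_shrink[OF assms(1,2) this, of t]
  show "a + t *\<^sub>R s *\<^sub>R (c - a) \<in> C"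
    using \<open>0 < t\<close> \<open>t < inverse s\<close> by simp
qed

lemma convex_contingent_cone_approx:
  fixes A :: "'a::real_normed_vector set"
  assumes "convex A" "xb \<in> A" "a \<in> contingent_cone A xb" "\<epsilon> > 0"
  obtains a' s where "dist a' a < \<epsilon>" "s > 0" "\<And>t. 0 \<le> t \<Longrightarrow> t \<le> s \<Longrightarrow> xb + t *\<^sub>R a' \<in> A"
proof -
  obtain an sn where a: "an \<longlonglongrightarrow> a" "\<forall>n. sn n > (0::real)" "\<forall>n. xb + sn n *\<^sub>R an n \<in> A"
    using assms(3) unfolding contingent_cone_def by blast
  have "\<forall>\<^sub>F n in sequentially. dist (an n) a < \<epsilon>"
    by (rule tendstoD[OF a(1) assms(4)])
  then obtain m where "dist (an m) a < \<epsilon>"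
    by (auto simp: eventually_sequentially)
  then show ?thesis
  proof (rule that)
    show "sn m > 0" using a(2) by blast
    fix t assume "0 \<le> t" "t \<le> sn m"
    then show "xb + t *\<^sub>R an m \<in> A"
      by (rule convex_add_scaleR_shrink[OF assms(1,2) a(3)[rule_format]])
  qed
qed

lemma locally_conic_iff:
  assumes "S \<inter> ball a r = (\<lambda>k. a + k) ` K \<inter> ball a r" "norm d < r"
  shows "a + d \<in> S \<longleftrightarrow> d \<in> K"
proof -
  have "a + d \<in> ball a r" using assms(2) by (simp add: dist_norm)
  then have "a + d \<in> S \<longleftrightarrow> a + d \<in> (\<lambda>k. a + k) ` K"
    using assms(1) by blast
  also have "\<dots> \<longleftrightarrow> d \<in> K"
    by (simp add: image_iff)
  finally show ?thesis .
qed

lemma contingent_cone_locally_conic: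
  fixes K :: "'a::real_normed_vector set"
  assumes "closed K" "cone K" "r > 0" and near: "S \<inter> ball a r = (\<lambda>k. a + k) ` K \<inter> ball a r"
  shows "contingent_cone S a = K"
proof
  show "contingent_cone S a \<subseteq> K"
  proof
    fix v assume "v \<in> contingent_cone S a"
    then obtain vn tn where v: "vn \<longlonglongrightarrow> v" "tn \<longlonglongrightarrow> 0" "\<forall>n. tn n > (0::real)"
        "\<forall>n. a + tn n *\<^sub>R vn n \<in> S"
      unfolding contingent_cone_def by blast
    have "(\<lambda>n. tn n *\<^sub>R vn n) \<longlonglongrightarrow> 0"
      using tendsto_scaleR[OF v(2,1)] by simp
    then have "eventually (\<lambda>n. norm (tn n *\<^sub>R vn n) < r) sequentially"
      using assms(3) by (auto dest: tendstoD)
    then have "eventually (\<lambda>n. vn n \<in> K) sequentially"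
    proof (rule eventually_mono)
      fix n assume "norm (tn n *\<^sub>R vn n) < r"
      then have "tn n *\<^sub>R vn n \<in> K"
        using locally_conic_iff[OF near] v(4) by blast
      then have "inverse (tn n) *\<^sub>R tn n *\<^sub>R vn n \<in> K"
        by (rule mem_cone[OF assms(2)]) (use v(3) in \<open>simp add: less_imp_le\<close>)
      then show "vn n \<in> K" using v(3) by (simp add: less_imp_neq[symmetric])
    qed
    then show "v \<in> K"
      using Lim_in_closed_set[OF assms(1) _ trivial_limit_sequentially v(1)] by blast
  qed
next
  show "K \<subseteq> contingent_cone S a"
  proof
    fix k assume k: "k \<in> K"
    show "k \<in> contingent_cone S a"
    proof (rule contingent_coneI_segment)
      show "0 < r / (norm k + 1)" using assms(3) norm_ge_zero[of k] by (intro divide_pos_pos) linarith+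
      fix t assume "0 < t" "t < r / (norm k + 1)"
      then have "t * (norm k + 1) < r"
        using norm_ge_zero[of k] by (simp add: pos_less_divide_eq)
      then have "norm (t *\<^sub>R k) < r"
        using \<open>0 < t\<close> by (simp add: distrib_left)
      moreover have "t *\<^sub>R k \<in> K" using assms(2) k \<open>0 < t\<close> by (simp add: mem_cone)
      ultimately show "a + t *\<^sub>R k \<in> S" using locally_conic_iff[OF near] by blast
    qed
  qed
qed

lemma infdist_locally_conic:
  fixes K :: "'a::real_normed_vector set"
  assumes "a \<in> S" and near: "S \<inter> ball a r = (\<lambda>k. a + k) ` K \<inter> ball a r"
    and x: "dist x a < r / 3"
  shows "infdist x S = infdist (x - a) K"
proof (rule antisym)
  have "r > 0"
    using x zero_le_dist[of x a] by linarith
  then have "0 \<in> K"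
    using locally_conic_iff[OF near, of 0] assms(1) by simp
  then have le_norm: "infdist (x - a) K \<le> dist x a"
    using infdist_le[of 0 K "x - a"] by (simp add: dist_norm)
  show "infdist x S \<le> infdist (x - a) K"
  proof (rule field_le_epsilon)
    fix e :: real assume "e > 0"
    then have e': "min e (r / 3) > 0" using \<open>r > 0\<close> by simp
    obtain k where k: "k \<in> K" "dist (x - a) k < infdist (x - a) K + min e (r / 3)"
      using infdist_approximate[OF _ e', of K "x - a"] \<open>0 \<in> K\<close> by blast
    have "dist k 0 \<le> dist k (x - a) + dist (x - a) 0"
      by (rule dist_triangle)
    then have "norm k < r"
      using k(2) le_norm x by (simp add: dist_commute dist_norm)
    then have "a + k \<in> S"
      using locally_conic_iff[OF near] k(1) by blast
    then have "infdist x S \<le> dist x (a + k)"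
      by (rule infdist_le)
    also have "\<dots> = dist (x - a) k"
      by (simp add: dist_norm algebra_simps)
    finally show "infdist x S \<le> infdist (x - a) K + e"
      using k(2) by linarith
  qed
  show "infdist (x - a) K \<le> infdist x S"
  proof (rule le_infdistI)
    show "S \<noteq> {}" using assms(1) by blast
    fix z assume "z \<in> S"
    show "infdist (x - a) K \<le> dist x z"
    proof (cases "dist z a < r")
      case True
      then have "z - a \<in> K"
        using locally_conic_iff[OF near, of "z - a"] \<open>z \<in> S\<close> by (simp add: dist_norm)
      then have "infdist (x - a) K \<le> dist (x - a) (z - a)"
        by (rule infdist_le)
      then show ?thesis by (simp add: dist_norm)
    next
      case False
      moreover have "dist z a \<le> dist z x + dist x a"
        by (rule dist_triangle)
      ultimately show ?thesis
        using le_norm x dist_commute[of z x] zero_le_dist[of x a] by linarith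
    qed
  qed
qed

lemma contingent_cone_approx:
  fixes C :: "'a::real_normed_vector set"
  assumes "w \<in> contingent_cone C a" "\<epsilon> > 0" "\<rho> > 0" "s > 0"
  obtains t w' where "0 < t" "t < s" "dist w' w < \<epsilon>" "norm (t *\<^sub>R w') < \<rho>" "a + t *\<^sub>R w' \<in> C"
proof -
  obtain wn tn where w: "wn \<longlonglongrightarrow> w" "tn \<longlonglongrightarrow> 0" "\<forall>n. tn n > (0::real)" "\<forall>n. a + tn n *\<^sub>R wn n \<in> C"
    using assms(1) unfolding contingent_cone_def by blast
  have "(\<lambda>n. tn n *\<^sub>R wn n) \<longlonglongrightarrow> 0"
    using tendsto_scaleR[OF w(2,1)] by simp
  from tendstoD[OF this assms(3)]
  have "\<forall>\<^sub>F n in sequentially. norm (tn n *\<^sub>R wn n) < \<rho>"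
    by simp
  moreover have "\<forall>\<^sub>F n in sequentially. tn n < s"
    using tendstoD[OF w(2) assms(4)] by (rule eventually_mono) (simp add: dist_real_def)
  ultimately have "\<forall>\<^sub>F n in sequentially. tn n < s \<and> dist (wn n) w < \<epsilon> \<and> norm (tn n *\<^sub>R wn n) < \<rho>"
    using tendstoD[OF w(1) assms(2)] by (intro eventually_conj)
  then obtain n where "tn n < s" "dist (wn n) w < \<epsilon>" "norm (tn n *\<^sub>R wn n) < \<rho>"
    by (auto simp: eventually_sequentially)
  with w(3,4) show ?thesis
    using that by blast
qed

lemma DFinv_inter_tangent_approx:
  fixes G :: "('a::real_normed_vector \<times> 'b::real_normed_vector) set"
  assumes "convex A" "xb \<in> A"
    and "u \<in> DFinv G yb xb (cball 0 \<eta>1)" "u \<in> msum (contingent_cone A xb) (cball 0 \<eta>2)"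
    and "\<epsilon> > 0" "\<rho> > 0"
  obtains t u' y a' where "t > 0" "dist u' u < \<epsilon>" "norm (t *\<^sub>R u') < \<rho>"
    "(xb + t *\<^sub>R u', y) \<in> G" "dist yb y \<le> t * (\<eta>1 + \<epsilon>)"
    "a' \<in> A" "dist (xb + t *\<^sub>R u') a' \<le> t * (\<eta>2 + 2 * \<epsilon>)"
proof -
  obtain v where v: "norm v \<le> \<eta>1" "(u, v) \<in> contingent_cone G (xb, yb)"
    using assms(3) unfolding DFinv_def by auto
  obtain a w where aw: "u = a + w" "a \<in> contingent_cone A xb" "norm w \<le> \<eta>2"
    using assms(4) unfolding msum_def by auto
  obtain a'' s where a'': "dist a'' a < \<epsilon>" "s > 0" "\<And>t. 0 \<le> t \<Longrightarrow> t \<le> s \<Longrightarrow> xb + t *\<^sub>R a'' \<in> A"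
    using convex_contingent_cone_approx[OF assms(1,2) aw(2) assms(5)] by blast
  obtain t u' v' where t: "0 < t" "t < s" and uv': "dist (u', v') (u, v) < \<epsilon>"
    and "norm (t *\<^sub>R (u', v')) < \<rho>" "(xb, yb) + t *\<^sub>R (u', v') \<in> G"
    using contingent_cone_approx[OF v(2) assms(5,6) a''(2)] by (metis prod.collapse)
  moreover have "norm (t *\<^sub>R u') \<le> norm (t *\<^sub>R (u', v'))"
    using norm_fst_le[of "t *\<^sub>R u'" "t *\<^sub>R v'"] by simp
  ultimately have u': "norm (t *\<^sub>R u') < \<rho>" and G: "(xb + t *\<^sub>R u', yb + t *\<^sub>R v') \<in> G"
    by simp_all
  have "dist u' u < \<epsilon>" "dist v' v < \<epsilon>"
    using uv' dist_fst_le[of "(u', v')" "(u, v)"] dist_snd_le[of "(u', v')" "(u, v)"] by simp_all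
  show ?thesis
  proof (rule that[OF t(1) \<open>dist u' u < \<epsilon>\<close> u' G])
    have "norm v' \<le> norm v + dist v' v"
      using norm_triangle_ineq[of v "v' - v"] by (simp add: dist_norm)
    then show "dist yb (yb + t *\<^sub>R v') \<le> t * (\<eta>1 + \<epsilon>)"
      using t(1) v(1) \<open>dist v' v < \<epsilon>\<close> by (simp add: dist_norm mult_left_mono)
    show "xb + t *\<^sub>R a'' \<in> A" using a''(3) t by simp
    have split: "u' - a'' = (u' - u + w) + (a - a'')" using aw(1) by simp
    have "norm (u' - a'') \<le> norm (u' - u) + norm w + norm (a - a'')"
      unfolding split using norm_triangle_ineq[of "u' - u + w" "a - a''"] norm_triangle_ineq[of "u' - u" w]
      by linarith
    also have "\<dots> \<le> \<epsilon> + \<eta>2 + \<epsilon>"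
      using \<open>dist u' u < \<epsilon>\<close> aw(3) a''(1) by (simp add: dist_norm norm_minus_commute)
    finally have "norm (u' - a'') \<le> \<epsilon> + \<eta>2 + \<epsilon>" .
    then show "dist (xb + t *\<^sub>R u') (xb + t *\<^sub>R a'') \<le> t * (\<eta>2 + 2 * \<epsilon>)"
      using t(1) by (simp add: dist_norm scaleR_diff_right[symmetric] mult_left_mono)
  qed
qed

lemma convex_scaleR_diff_in_DFinv_inter:
  fixes G :: "('a::real_normed_vector \<times> 'b::real_normed_vector) set"
  assumes "convex G" "(xb, yb) \<in> G" "(x, y) \<in> G" "convex A" "xb \<in> A" "a \<in> A" "s > 0"
  shows "s *\<^sub>R (x - xb) \<in> DFinv G yb xb (cball 0 (s * dist yb y))
      \<inter> msum (contingent_cone A xb) (cball 0 (s * dist x a))"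
proof
  have "s *\<^sub>R ((x, y) - (xb, yb)) \<in> contingent_cone G (xb, yb)"
    by (rule convex_scaleR_diff_in_contingent_cone[OF assms(1-3,7)])
  then show "s *\<^sub>R (x - xb) \<in> DFinv G yb xb (cball 0 (s * dist yb y))"
    unfolding DFinv_def using assms(7) by (auto simp: dist_norm norm_minus_commute)
  have "s *\<^sub>R (a - xb) \<in> contingent_cone A xb"
    by (rule convex_scaleR_diff_in_contingent_cone[OF assms(4-7)])
  moreover have "s *\<^sub>R (x - xb) = s *\<^sub>R (a - xb) + s *\<^sub>R (x - a)"
    by (simp add: algebra_simps)
  moreover have "s *\<^sub>R (x - a) \<in> cball 0 (s * dist x a)"
    using assms(7) by (simp add: dist_norm)
  ultimately show "s *\<^sub>R (x - xb) \<in> msum (contingent_cone A xb) (cball 0 (s * dist x a))"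
    unfolding msum_def by blast
qed

definition subreg_estimate ::
    "('a::real_normed_vector \<times> 'b::real_normed_vector) set \<Rightarrow> 'a set \<Rightarrow> 'a \<Rightarrow> 'b \<Rightarrow> real \<Rightarrow> real \<Rightarrow> bool"
  where
  "subreg_estimate G A xb yb \<tau> \<delta> \<longleftrightarrow> (\<forall>x\<in>ball xb \<delta>.
      ereal (infdist x (solset G A yb)) \<le> ereal \<tau> * (edist_set yb {y. (x, y) \<in> G} + ereal (infdist x A)))"

definition tangent_inclusion ::
    "('a::real_normed_vector \<times> 'b::real_normed_vector) set \<Rightarrow> 'a set \<Rightarrow> 'a \<Rightarrow> 'b \<Rightarrow> real \<Rightarrow> bool"
  where
  "tangent_inclusion G A xb yb \<eta> \<longleftrightarrow> (\<forall>\<eta>1 \<eta>2. \<eta>1 \<ge> 0 \<and> \<eta>2 \<ge> 0 \<and> \<eta>1 + \<eta>2 < \<eta> \<longrightarrow>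
      DFinv G yb xb (cball 0 \<eta>1) \<inter> msum (contingent_cone A xb) (cball 0 \<eta>2)
        \<subseteq> msum (contingent_cone (solset G A yb) xb) (cball 0 1))"

lemma subreg_estimateI:
  assumes "\<tau> > 0" \<comment> \<open>needed where \<open>F x = {}\<close>: in \<open>ereal\<close>, \<open>0 * \<infinity> = 0\<close>\<close>
    and "\<And>x y. x \<in> ball xb \<delta> \<Longrightarrow> (x, y) \<in> G \<Longrightarrow>
      infdist x (solset G A yb) \<le> \<tau> * (infdist yb {y. (x, y) \<in> G} + infdist x A)"
  shows "subreg_estimate G A xb yb \<tau> \<delta>"
  unfolding subreg_estimate_def edist_set_def using assms by auto

lemma subreg_estimateD:
  assumes "subreg_estimate G A xb yb \<tau> \<delta>" "x \<in> ball xb \<delta>" "(x, y) \<in> G"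
  shows "infdist x (solset G A yb) \<le> \<tau> * (infdist yb {y. (x, y) \<in> G} + infdist x A)"
proof -
  have "edist_set yb {y. (x, y) \<in> G} = ereal (infdist yb {y. (x, y) \<in> G})"
    using assms(3) by (auto simp: edist_set_def)
  moreover have "ereal (infdist x (solset G A yb))
      \<le> ereal \<tau> * (edist_set yb {y. (x, y) \<in> G} + ereal (infdist x A))"
    using assms(1,2) unfolding subreg_estimate_def by blast
  ultimately show ?thesis by simp
qed

locale locally_conic_solutions =
  fixes G :: "('a::real_normed_vector \<times> 'b::real_normed_vector) set" and A :: "'a set"
    and xb :: 'a and yb :: 'b and K :: "'a set" and r :: real
  assumes convex_G: "convex G" and convex_A: "convex A"
    and xb_solution: "xb \<in> solset G A yb"
    and closed_K: "closed K" and cone_K: "cone K" and r_pos: "r > 0"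
    and solset_near_xb: "solset G A yb \<inter> ball xb r = (\<lambda>k. xb + k) ` K \<inter> ball xb r"
begin

abbreviation "S \<equiv> solset G A yb"

lemma xb_yb_in_G: "(xb, yb) \<in> G" and xb_in_A: "xb \<in> A"
  using xb_solution by (simp_all add: solset_def)

lemma zero_in_K: "0 \<in> K"
  using locally_conic_iff[OF solset_near_xb, of 0] xb_solution r_pos by simp

lemma contingent_cone_solset: "contingent_cone S xb = K"
  by (rule contingent_cone_locally_conic[OF closed_K cone_K r_pos solset_near_xb])

lemma infdist_solset: "dist x xb < r / 3 \<Longrightarrow> infdist x S = infdist (x - xb) K"
  by (rule infdist_locally_conic[OF xb_solution solset_near_xb])

lemma infdist_cone_le_of_subreg_estimate:
  assumes "\<tau> > 0" "\<delta> > 0" "subreg_estimate G A xb yb \<tau> \<delta>"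
    and "u \<in> DFinv G yb xb (cball 0 \<eta>1)" "u \<in> msum (contingent_cone A xb) (cball 0 \<eta>2)"
  shows "infdist u K \<le> \<tau> * (\<eta>1 + \<eta>2)"
proof -
  have bound: "infdist u K \<le> \<tau> * (\<eta>1 + \<eta>2) + \<epsilon> * (1 + 3 * \<tau>)" if "\<epsilon> > 0" for \<epsilon>
  proof -
    have "min \<delta> (r / 3) > 0" using assms(2) r_pos by simp
    then obtain t u' y a where t: "t > 0" and u': "dist u' u < \<epsilon>" "norm (t *\<^sub>R u') < min \<delta> (r / 3)"
      and y: "(xb + t *\<^sub>R u', y) \<in> G" "dist yb y \<le> t * (\<eta>1 + \<epsilon>)"
      and a: "a \<in> A" "dist (xb + t *\<^sub>R u') a \<le> t * (\<eta>2 + 2 * \<epsilon>)"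
      using DFinv_inter_tangent_approx[OF convex_A xb_in_A assms(4,5) \<open>\<epsilon> > 0\<close>] by blast
    define x where "x = xb + t *\<^sub>R u'"
    have "t * infdist u' K \<le> infdist (t *\<^sub>R u') K"
      using cone_infdist_scaleR_le[OF cone_K _ t] zero_in_K by blast
    also have "\<dots> = infdist x S"
      using infdist_solset[of x] u'(2) by (simp add: x_def dist_norm)
    also have "\<dots> \<le> \<tau> * (infdist yb {y. (x, y) \<in> G} + infdist x A)"
      using subreg_estimateD[OF assms(3) _ y(1)] u'(2) by (simp add: x_def dist_norm)
    also have "\<dots> \<le> \<tau> * (dist yb y + dist x a)"
      using y(1) a(1) assms(1) by (intro mult_left_mono add_mono infdist_le) (auto simp: x_def)
    also have "\<dots> \<le> \<tau> * (t * (\<eta>1 + \<epsilon>) + t * (\<eta>2 + 2 * \<epsilon>))"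
      using y(2) a(2) assms(1) unfolding x_def by (intro mult_left_mono add_mono) auto
    also have "\<dots> = t * (\<tau> * (\<eta>1 + \<eta>2 + 3 * \<epsilon>))"
      by (simp add: algebra_simps)
    finally have "infdist u' K \<le> \<tau> * (\<eta>1 + \<eta>2 + 3 * \<epsilon>)"
      using t by simp
    moreover have "infdist u K \<le> infdist u' K + dist u u'"
      by (rule infdist_triangle)
    ultimately show ?thesis
      using u'(1) by (simp add: dist_commute algebra_simps)
  qed
  show ?thesis
  proof (rule field_le_epsilon)
    fix e :: real assume "e > 0"
    moreover have "1 + 3 * \<tau> > 0" using assms(1) by simp
    ultimately show "infdist u K \<le> \<tau> * (\<eta>1 + \<eta>2) + e"
      using bound[of "e / (1 + 3 * \<tau>)"] by simp
  qed
qed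

lemma tangent_inclusion_of_subreg_estimate:
  assumes "\<tau> > 0" "\<delta> > 0" "subreg_estimate G A xb yb \<tau> \<delta>"
  shows "tangent_inclusion G A xb yb (1 / \<tau>)"
  unfolding tangent_inclusion_def
proof (intro allI impI subsetI)
  fix \<eta>1 \<eta>2 u
  assume \<eta>: "\<eta>1 \<ge> 0 \<and> \<eta>2 \<ge> 0 \<and> \<eta>1 + \<eta>2 < 1 / \<tau>"
    and u: "u \<in> DFinv G yb xb (cball 0 \<eta>1) \<inter> msum (contingent_cone A xb) (cball 0 \<eta>2)"
  have "infdist u K \<le> \<tau> * (\<eta>1 + \<eta>2)"
    using infdist_cone_le_of_subreg_estimate[OF assms] u by blast
  also have "\<dots> < 1"
    using \<eta> assms(1) by (simp add: pos_less_divide_eq mult.commute)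
  finally obtain k where "k \<in> K" "dist u k < 1"
    using infdist_approximate[of K "1 - infdist u K" u] zero_in_K by auto
  then show "u \<in> msum (contingent_cone S xb) (cball 0 1)"
    unfolding msum_def contingent_cone_solset
    by (intro CollectI exI[of _ k] exI[of _ "u - k"]) (simp add: dist_norm norm_minus_commute)
qed

lemma infdist_cone_le_of_tangent_inclusion:
  assumes "tangent_inclusion G A xb yb \<eta>" "\<eta> > 0" "(x, y) \<in> G" "a \<in> A"
  shows "\<eta> * infdist (x - xb) K \<le> dist yb y + dist x a"
proof -
  have "\<eta> * infdist (x - xb) K \<le> dist yb y + dist x a + \<epsilon>" if "\<epsilon> > 0" for \<epsilon>
  proof -
    \<comment> \<open>the \<open>\<epsilon>\<close> keeps \<open>s\<close> finite when \<open>y = yb\<close> and \<open>x = a\<close>\<close>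
    define p where "p = dist yb y + dist x a + \<epsilon>"
    define s where "s = \<eta> / p"
    have "p > 0" using \<open>\<epsilon> > 0\<close> by (simp add: p_def add_nonneg_pos)
    then have s: "s > 0" and "s * p = \<eta>" using assms(2) by (simp_all add: s_def)
    moreover have "s * (dist yb y + dist x a) < s * p"
      using s \<open>\<epsilon> > 0\<close> by (simp add: p_def)
    ultimately have "s * dist yb y + s * dist x a < \<eta>"
      by (simp add: distrib_left)
    then have incl: "DFinv G yb xb (cball 0 (s * dist yb y))
        \<inter> msum (contingent_cone A xb) (cball 0 (s * dist x a))
        \<subseteq> msum K (cball 0 1)"
      using assms(1) s unfolding tangent_inclusion_def contingent_cone_solset by simp
    obtain k b where kb: "s *\<^sub>R (x - xb) = k + b" "k \<in> K" "norm b \<le> 1"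
      using subsetD[OF incl convex_scaleR_diff_in_DFinv_inter[OF convex_G xb_yb_in_G assms(3)
          convex_A xb_in_A assms(4) s]]
      unfolding msum_def by auto
    have "x - xb = inverse s *\<^sub>R k + inverse s *\<^sub>R b"
      using arg_cong[OF kb(1), of "\<lambda>z. inverse s *\<^sub>R z"] s by (simp add: scaleR_add_right)
    then have "dist (x - xb) (inverse s *\<^sub>R k) = norm b / s"
      using s by (simp add: dist_norm divide_inverse_commute)
    moreover have "inverse s *\<^sub>R k \<in> K"
      using kb(2) s by (intro mem_cone[OF cone_K]) auto
    ultimately have "infdist (x - xb) K \<le> norm b / s"
      by (metis infdist_le)
    also have "\<dots> \<le> 1 / s"
      using kb(3) s by (simp add: divide_right_mono)
    finally have "\<eta> * infdist (x - xb) K \<le> \<eta> * (1 / s)"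
      using assms(2) by (intro mult_left_mono) auto
    also have "\<eta> * (1 / s) = p"
      using \<open>p > 0\<close> assms(2) by (simp add: s_def)
    finally show ?thesis by (simp add: p_def)
  qed
  then show ?thesis by (rule field_le_epsilon)
qed

lemma subreg_estimate_of_tangent_inclusion:
  assumes "tangent_inclusion G A xb yb \<eta>" "\<eta> > 0"
  shows "subreg_estimate G A xb yb (1 / \<eta>) (r / 3)"
proof (rule subreg_estimateI)
  show "1 / \<eta> > 0" using assms(2) by simp
  fix x y assume x: "x \<in> ball xb (r / 3)" and "(x, y) \<in> G"
  have "A \<noteq> {}" using xb_in_A by blast
  have "\<eta> * infdist x S - infdist x A \<le> infdist yb {y. (x, y) \<in> G}"
  proof (rule le_infdistI)
    show "{y. (x, y) \<in> G} \<noteq> {}" using \<open>(x, y) \<in> G\<close> by blast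
    fix y' assume "y' \<in> {y. (x, y) \<in> G}"
    have "\<eta> * infdist x S - dist yb y' \<le> infdist x A"
    proof (rule le_infdistI[OF \<open>A \<noteq> {}\<close>])
      fix a assume "a \<in> A"
      have "\<eta> * infdist (x - xb) K \<le> dist yb y' + dist x a"
        using infdist_cone_le_of_tangent_inclusion[OF assms _ \<open>a \<in> A\<close>] \<open>y' \<in> _\<close> by simp
      then show "\<eta> * infdist x S - dist yb y' \<le> dist x a"
        using infdist_solset[of x] x by (simp add: dist_commute)
    qed
    then show "\<eta> * infdist x S - infdist x A \<le> dist yb y'" by simp
  qed
  then show "infdist x S \<le> 1 / \<eta> * (infdist yb {y. (x, y) \<in> G} + infdist x A)"
    using assms(2) by (simp add: field_simps)
qed

lemma tangent_inclusion_set_eq_reciprocals: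
  "{\<eta>. \<eta> > 0 \<and> tangent_inclusion G A xb yb \<eta>}
    = (\<lambda>\<tau>. 1 / \<tau>) ` {\<tau>. \<tau> > 0 \<and> (\<exists>\<delta>>0. subreg_estimate G A xb yb \<tau> \<delta>)}"
proof (intro equalityI subsetI)
  fix \<eta> assume "\<eta> \<in> {\<eta>. \<eta> > 0 \<and> tangent_inclusion G A xb yb \<eta>}"
  then have "\<eta> > 0" "subreg_estimate G A xb yb (1 / \<eta>) (r / 3)"
    using subreg_estimate_of_tangent_inclusion by auto
  then have "1 / \<eta> \<in> {\<tau>. \<tau> > 0 \<and> (\<exists>\<delta>>0. subreg_estimate G A xb yb \<tau> \<delta>)}"
    using r_pos by (auto intro!: exI[of _ "r / 3"])
  then show "\<eta> \<in> (\<lambda>\<tau>. 1 / \<tau>) ` {\<tau>. \<tau> > 0 \<and> (\<exists>\<delta>>0. subreg_estimate G A xb yb \<tau> \<delta>)}"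
    by (rule image_eqI[rotated]) simp
next
  fix \<eta> assume "\<eta> \<in> (\<lambda>\<tau>. 1 / \<tau>) ` {\<tau>. \<tau> > 0 \<and> (\<exists>\<delta>>0. subreg_estimate G A xb yb \<tau> \<delta>)}"
  then show "\<eta> \<in> {\<eta>. \<eta> > 0 \<and> tangent_inclusion G A xb yb \<eta>}"
    using tangent_inclusion_of_subreg_estimate by auto
qed

end

lemma inverse_Inf_ereal_eq_sup0:
  assumes "\<And>\<tau>. \<tau> \<in> T \<Longrightarrow> \<tau> > 0"
  shows "inverse (Inf (ereal ` T)) = sup0 ((\<lambda>\<tau>. 1 / \<tau>) ` T)"
proof (cases "T = {}")
  case True
  then show ?thesis by (simp add: sup0_def top_ereal_def)
next
  case False
  define I where "I = Inf (ereal ` T)"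
  define s where "s = (SUP \<tau>\<in>T. inverse (ereal \<tau>))"
  have "sup0 ((\<lambda>\<tau>. 1 / \<tau>) ` T) = (SUP \<tau>\<in>T. ereal (1 / \<tau>))"
    using False by (simp add: sup0_def image_image)
  also have "\<dots> = s"
    unfolding s_def
  proof (rule SUP_cong[OF refl])
    fix \<tau> assume "\<tau> \<in> T"
    then show "ereal (1 / \<tau>) = inverse (ereal \<tau>)"
      using assms[of \<tau>] by (simp add: inverse_eq_divide)
  qed
  finally have sup0_eq: "sup0 ((\<lambda>\<tau>. 1 / \<tau>) ` T) = s" .
  have I_nonneg: "0 \<le> I"
    unfolding I_def using assms by (intro Inf_greatest) (auto simp: less_imp_le)
  have "s \<le> inverse I"
    unfolding s_def
  proof (rule SUP_least)
    fix \<tau> assume "\<tau> \<in> T"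
    then have "I \<le> ereal \<tau>" unfolding I_def by (intro Inf_lower) auto
    then show "inverse (ereal \<tau>) \<le> inverse I" by (rule ereal_inverse_antimono[OF I_nonneg])
  qed
  moreover have "inverse I \<le> s"
  proof -
    obtain \<tau>0 where "\<tau>0 \<in> T" using False by blast
    then have s_nonneg: "0 \<le> s"
      unfolding s_def using assms[of \<tau>0] by (intro SUP_upper2[of \<tau>0]) auto
    have "inverse s \<le> I"
      unfolding I_def
    proof (rule Inf_greatest)
      fix z assume "z \<in> ereal ` T"
      then obtain \<tau> where \<tau>: "\<tau> \<in> T" "z = ereal \<tau>" by blast
      have "inverse (ereal \<tau>) \<le> s" unfolding s_def using \<tau>(1) by (rule SUP_upper)
      then have "inverse s \<le> inverse (inverse (ereal \<tau>))"
        using assms[OF \<tau>(1)] by (intro ereal_inverse_antimono) simp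
      then show "inverse s \<le> z" using assms[OF \<tau>(1)] \<tau>(2) by simp
    qed
    then have "inverse I \<le> inverse (inverse s)"
      using s_nonneg by (intro ereal_inverse_antimono inverse_ereal_ge0I)
    then show ?thesis using s_nonneg by simp
  qed
  ultimately show ?thesis
    unfolding sup0_eq I_def by (rule antisym[rotated])
qed

theorem theorem3p2:
  fixes G :: "('a::banach \<times> 'b::banach) set" and A :: "'a set"
    and yb :: 'b and xb :: 'a and K :: "'a set" and V :: "'a set"
  assumes "closed G" and "convex G"
    and "closed A" and "convex A"
    and "xb \<in> solset G A yb"
    and "closed K" and "convex K" and "cone K"
    and "\<exists>U. open U \<and> xb \<in> U \<and> U \<subseteq> V"
    and "solset G A yb \<inter> V = ((\<lambda>k. xb + k) ` K) \<inter> V"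
  shows "inverse (subreg G A xb yb) =
    sup0 {\<eta>::real. \<eta> > 0 \<and> (\<forall>\<eta>1 \<eta>2. \<eta>1 \<ge> 0 \<and> \<eta>2 \<ge> 0 \<and> \<eta>1 + \<eta>2 < \<eta> \<longrightarrow>
        DFinv G yb xb (cball 0 \<eta>1) \<inter> msum (contingent_cone A xb) (cball 0 \<eta>2)
          \<subseteq> msum (contingent_cone (solset G A yb) xb) (cball 0 1))}"
proof -
  obtain U where "open U" "xb \<in> U" "U \<subseteq> V"
    using assms(9) by blast
  then obtain r where "r > 0" "ball xb r \<subseteq> V"
    by (meson open_contains_ball order_trans)
  then have "solset G A yb \<inter> ball xb r = (\<lambda>k. xb + k) ` K \<inter> ball xb r"
    using assms(10) by blast
  then interpret locally_conic_solutions G A xb yb K r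
    by (intro locally_conic_solutions.intro assms(2,4,5,6,8) \<open>r > 0\<close>)
  have subreg_eq: "subreg G A xb yb = Inf (ereal ` {\<tau>. \<tau> > 0 \<and> (\<exists>\<delta>>0. subreg_estimate G A xb yb \<tau> \<delta>)})"
    unfolding subreg_def subreg_estimate_def ..
  show ?thesis
    unfolding tangent_inclusion_def[symmetric] tangent_inclusion_set_eq_reciprocals subreg_eq
    by (rule inverse_Inf_ereal_eq_sup0) simp
qed

end
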